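(* For any instance $\mathcal{I}$ of the online volunteer notification problem, $\mathbf{LP}_{\mathcal{I}}$ is at least the expected number of tasks completed by the clairvoyant solution.
   Context: Online volunteer notification problem. An instance $\mathcal{I}$ consists of volunteers $[V]$, task types $[S]$, horizon $T$, arrival probabilities $\lambda_{s,t}\ge0$ with $\sum_{s=1}^S\lambda_{s,t}\le1$, match probabilities $p_{v,s}\in[0,1]$, and a probability mass function $g$ on the positive integers with CDF $G(\tau)=\sum_{i\le\tau}g(i)$, $G(0)=0$. In each period $t$ at most one task arrives, of type $s$ with probability $\lambda_{s,t}$, independently across periods. All volunteers start active. Upon an arrival, a subset of volunteers is notified; each notified active volunteer $v$ responds positively independently with probability $p_{v,s}$, and the task is completed iff at least one does. A volunteer active and notified at time $t$ becomes inactive (regardless of response) and becomes active again at time $t+Z$, where $Z\sim g$ is independent; inactive volunteers ignore notifications and are unaffected by them. Clairvoyant solution: the best (maximum expected number of completed tasks) notification strategy that knows the entire sequence of arrivals in advance and the state (active/inactive) of every volunteer in every period, but does not know the realized inactivity length $Z$ of a volunteer notified at time $t$ before time $t$ (i.e., decisions at time $t$ cannot depend on inactivity lengths triggered at times $\ge t$). $\mathbf{LP}_{\mathcal{I}}=\max\sum_{t=1}^T\sum_{s=1}^S\lambda_{s,t}\min\{\sum_{v=1}^V x_{v,s,t}p_{v,s},1\}$ subject to $0\le x_{v,s,t}\le1$ for all $v,s,t$ and $\sum_{\tau=1}^t\sum_{s=1}^S\lambda_{s,\tau}x_{v,s,\tau}(1-G(t-\tau))\le1$ for all $v,t$. *)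

theory Defs
  imports "HOL-Probability.Probability"
begin

(* Indices: volunteers v \<in> {1..V}, task types s \<in> {1..S}, periods t \<in> {1..T}.
   lam s t = \<lambda>_{s,t},  p v s = p_{v,s},  g = pmf of the inactivity length Z. *)

definition G :: "nat pmf \<Rightarrow> nat \<Rightarrow> real" where
  "G g \<tau> = measure_pmf.prob g {1..\<tau>}"

definition LP_feasible :: "nat \<Rightarrow> nat \<Rightarrow> nat \<Rightarrow> (nat \<Rightarrow> nat \<Rightarrow> real) \<Rightarrow> nat pmf
    \<Rightarrow> (nat \<Rightarrow> nat \<Rightarrow> nat \<Rightarrow> real) set" where
  "LP_feasible V S T lam g =
     {x. (\<forall>v\<in>{1..V}. \<forall>s\<in>{1..S}. \<forall>t\<in>{1..T}. 0 \<le> x v s t \<and> x v s t \<le> 1) \<and>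
         (\<forall>v\<in>{1..V}. \<forall>t\<in>{1..T}.
            (\<Sum>\<tau>\<in>{1..t}. \<Sum>s\<in>{1..S}. lam s \<tau> * x v s \<tau> * (1 - G g (t - \<tau>))) \<le> 1)}"

definition LP_obj :: "nat \<Rightarrow> nat \<Rightarrow> nat \<Rightarrow> (nat \<Rightarrow> nat \<Rightarrow> real) \<Rightarrow> (nat \<Rightarrow> nat \<Rightarrow> real)
    \<Rightarrow> (nat \<Rightarrow> nat \<Rightarrow> nat \<Rightarrow> real) \<Rightarrow> real" where
  "LP_obj V S T lam p x =
     (\<Sum>t\<in>{1..T}. \<Sum>s\<in>{1..S}. lam s t * min (\<Sum>v\<in>{1..V}. x v s t * p v s) 1)"

definition LP_value :: "nat \<Rightarrow> nat \<Rightarrow> nat \<Rightarrow> (nat \<Rightarrow> nat \<Rightarrow> real) \<Rightarrow> (nat \<Rightarrow> nat \<Rightarrow> real)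
    \<Rightarrow> nat pmf \<Rightarrow> real" where
  "LP_value V S T lam p g = Sup (LP_obj V S T lam p ` LP_feasible V S T lam g)"

(* Randomness of a scenario:
   a :: arrivals,   a t = None (no task at t) or Some s (task of type s at t);
   z :: (v,t) \<mapsto> inactivity length triggered if v is active and notified at t (iid ~ g);
   r :: (v,s,t) \<mapsto> response of v if notified, active, for a task of type s at t (Bernoulli p v s). *)
type_synonym arrivals = "nat \<Rightarrow> nat option"
type_synonym zs = "nat \<times> nat \<Rightarrow> nat"
type_synonym rs = "nat \<times> nat \<times> nat \<Rightarrow> bool"
(* a (deterministic) notification strategy: period t, full arrival sequence,
   inactivity lengths and responses  \<mapsto>  set of notified volunteers *)
type_synonym policy = "nat \<Rightarrow> arrivals \<Rightarrow> zs \<Rightarrow> rs \<Rightarrow> nat set"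

(* clairvoyant information structure: the decision at time t may depend on the whole
   arrival sequence, but on inactivity lengths / responses only of periods < t *)
definition nonanticipating :: "policy \<Rightarrow> bool" where
  "nonanticipating \<pi> \<longleftrightarrow>
     (\<forall>t a z z' r r'. (\<forall>v \<tau>. \<tau> < t \<longrightarrow> z (v, \<tau>) = z' (v, \<tau>)) \<and>
                      (\<forall>v s \<tau>. \<tau> < t \<longrightarrow> r (v, s, \<tau>) = r' (v, s, \<tau>))
                      \<longrightarrow> \<pi> t a z r = \<pi> t a z' r')"

(* ready V \<pi> a z r t v = first period from which v is active, after periods 1..t
   have been processed; v is active at period t' iff ready ... (t'-1) v \<le> t'. *)
fun ready :: "nat \<Rightarrow> policy \<Rightarrow> arrivals \<Rightarrow> zs \<Rightarrow> rs \<Rightarrow> nat \<Rightarrow> nat \<Rightarrow> nat" where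
  "ready V \<pi> a z r 0 = (\<lambda>v. 0)"
| "ready V \<pi> a z r (Suc t) =
     (let rd = ready V \<pi> a z r t in
      case a (Suc t) of
        None \<Rightarrow> rd
      | Some s \<Rightarrow> (\<lambda>v. if v \<in> {1..V} \<and> v \<in> \<pi> (Suc t) a z r \<and> rd v \<le> Suc t
                       then Suc t + z (v, Suc t) else rd v))"

definition completed :: "nat \<Rightarrow> policy \<Rightarrow> arrivals \<Rightarrow> zs \<Rightarrow> rs \<Rightarrow> nat \<Rightarrow> bool" where
  "completed V \<pi> a z r t =
     (case a t of
        None \<Rightarrow> False
      | Some s \<Rightarrow> (\<exists>v\<in>{1..V}. v \<in> \<pi> t a z r \<and> ready V \<pi> a z r (t - 1) v \<le> t \<and> r (v, s, t)))"

definition num_completed :: "nat \<Rightarrow> nat \<Rightarrow> policy \<Rightarrow> arrivals \<Rightarrow> zs \<Rightarrow> rs \<Rightarrow> nat" where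
  "num_completed V T \<pi> a z r = card {t\<in>{1..T}. completed V \<pi> a z r t}"

definition arrival_pmf :: "nat \<Rightarrow> (nat \<Rightarrow> nat \<Rightarrow> real) \<Rightarrow> nat \<Rightarrow> nat option pmf" where
  "arrival_pmf S lam t = embed_pmf (\<lambda>oa. case oa of
       None \<Rightarrow> 1 - (\<Sum>s\<in>{1..S}. lam s t)
     | Some s \<Rightarrow> (if s \<in> {1..S} then lam s t else 0))"

definition scenario_pmf :: "nat \<Rightarrow> nat \<Rightarrow> nat \<Rightarrow> (nat \<Rightarrow> nat \<Rightarrow> real) \<Rightarrow> (nat \<Rightarrow> nat \<Rightarrow> real)
    \<Rightarrow> nat pmf \<Rightarrow> (arrivals \<times> zs \<times> rs) pmf" where
  "scenario_pmf V S T lam p g =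
     pair_pmf (Pi_pmf {1..T} None (arrival_pmf S lam))
       (pair_pmf (Pi_pmf ({1..V} \<times> {1..T}) 0 (\<lambda>_. g))
                 (Pi_pmf ({1..V} \<times> {1..S} \<times> {1..T}) False
                         (\<lambda>(v, s, t). bernoulli_pmf (p v s))))"

definition expected_completed :: "nat \<Rightarrow> nat \<Rightarrow> nat \<Rightarrow> (nat \<Rightarrow> nat \<Rightarrow> real) \<Rightarrow> (nat \<Rightarrow> nat \<Rightarrow> real)
    \<Rightarrow> nat pmf \<Rightarrow> policy \<Rightarrow> real" where
  "expected_completed V S T lam p g \<pi> =
     measure_pmf.expectation (scenario_pmf V S T lam p g)
       (\<lambda>(a, z, r). real (num_completed V T \<pi> a z r))"

definition clairvoyant_value :: "nat \<Rightarrow> nat \<Rightarrow> nat \<Rightarrow> (nat \<Rightarrow> nat \<Rightarrow> real) \<Rightarrow> (nat \<Rightarrow> nat \<Rightarrow> real)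
    \<Rightarrow> nat pmf \<Rightarrow> real" where
  "clairvoyant_value V S T lam p g =
     Sup (expected_completed V S T lam p g ` {\<pi>. nonanticipating \<pi>})"

end

theory Submission
  imports Defs
begin

(* Fix a nonanticipating policy and let x v s t be the probability that v is notified while
   active at t for a task of type s, divided by lam s t.  The decision at t sees responses and
   inactivity lengths of earlier periods only, so the response of v at t and its inactivity
   length z (v, t) are independent of that event.  Hence a task of type s at t is completed
   with probability at most lam s t * min (\<Sum>v. x v s t * p v s) 1, which sums to the LP
   objective; and the events "v was notified while active at \<tau> \<le> t and is still inactive at t",
   of probability lam s \<tau> * x v s \<tau> * (1 - G g (t - \<tau>)), are pairwise disjoint, which is the
   LP constraint. *)

lemma prob_bind_pmf:
  "measure_pmf.prob (bind_pmf M N) X = (\<integral>x. measure_pmf.prob (N x) X \<partial>M)"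
proof -
  have "ennreal (measure_pmf.prob (bind_pmf M N) X) = (\<integral>\<^sup>+x. emeasure (N x) X \<partial>M)"
    by (simp add: measure_pmf.emeasure_eq_measure[symmetric])
  also have "\<dots> = ennreal (\<integral>x. measure_pmf.prob (N x) X \<partial>M)"
    by (simp add: measure_pmf.emeasure_eq_measure nn_integral_eq_integral
        measure_pmf.integrable_const_bound[where B=1])
  finally show ?thesis
    by (simp add: integral_nonneg)
qed

lemma prob_pair_pmf:
  "measure_pmf.prob (pair_pmf M N) X = (\<integral>x. measure_pmf.prob N {y. (x, y) \<in> X} \<partial>M)"
  by (simp add: pair_pmf_def prob_bind_pmf flip: map_pmf_def) (simp add: vimage_def)

lemma prob_pair_pmf_factor_snd:
  assumes "\<And>x. measure_pmf.prob N {y. Q (x, y) \<and> R y} = measure_pmf.prob N {y. Q (x, y)} * c"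
  shows "measure_pmf.prob (pair_pmf M N) {w. Q w \<and> R (snd w)} =
    measure_pmf.prob (pair_pmf M N) {w. Q w} * c"
  by (simp add: prob_pair_pmf assms)

lemma prob_pair_pmf_factor_fst:
  assumes "\<And>y. measure_pmf.prob M {x. Q (x, y) \<and> R x} = measure_pmf.prob M {x. Q (x, y)} * c"
  shows "measure_pmf.prob (pair_pmf M N) {w. Q w \<and> R (fst w)} =
    measure_pmf.prob (pair_pmf M N) {w. Q w} * c"
  using prob_pair_pmf_factor_snd[of M "\<lambda>(y, x). Q (x, y)" R c N]
  by (subst (1 2) pair_commute_pmf) (simp add: vimage_def case_prod_beta assms)

lemma prob_pair_pmf3_factor_third:
  assumes "\<And>a b. measure_pmf.prob C {c. Q a b c \<and> R c} = measure_pmf.prob C {c. Q a b c} * k"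
  shows "measure_pmf.prob (pair_pmf A (pair_pmf B C)) {(a, b, c). Q a b c \<and> R c} =
    measure_pmf.prob (pair_pmf A (pair_pmf B C)) {(a, b, c). Q a b c} * k"
proof -
  have "measure_pmf.prob (pair_pmf B C) {(b, c). Q a b c \<and> R c} =
      measure_pmf.prob (pair_pmf B C) {(b, c). Q a b c} * k" for a
    using prob_pair_pmf_factor_snd[of C "\<lambda>(b, c). Q a b c" R k B] assms
    by (simp add: case_prod_beta')
  then show ?thesis
    using prob_pair_pmf_factor_snd[of "pair_pmf B C" "\<lambda>(a, b, c). Q a b c" "\<lambda>(b, c). R c" k A]
    by (simp add: case_prod_beta')
qed

lemma prob_pair_pmf3_factor_second:
  assumes "\<And>a c. measure_pmf.prob B {b. Q a b c \<and> R b} = measure_pmf.prob B {b. Q a b c} * k"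
  shows "measure_pmf.prob (pair_pmf A (pair_pmf B C)) {(a, b, c). Q a b c \<and> R b} =
    measure_pmf.prob (pair_pmf A (pair_pmf B C)) {(a, b, c). Q a b c} * k"
proof -
  have "measure_pmf.prob (pair_pmf B C) {(b, c). Q a b c \<and> R b} =
      measure_pmf.prob (pair_pmf B C) {(b, c). Q a b c} * k" for a
    using prob_pair_pmf_factor_fst[of B "\<lambda>(b, c). Q a b c" R k C] assms
    by (simp add: case_prod_beta')
  then show ?thesis
    using prob_pair_pmf_factor_snd[of "pair_pmf B C" "\<lambda>(a, b, c). Q a b c" "\<lambda>(b, c). R b" k A]
    by (simp add: case_prod_beta')
qed

lemma prob_Pi_pmf_factor_component:
  assumes "finite I" "i \<in> I" and Q_indep: "\<And>f y. Q (f(i := y)) = Q f"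
  shows "measure_pmf.prob (Pi_pmf I d P) {f. Q f \<and> R (f i)} =
    measure_pmf.prob (Pi_pmf I d P) {f. Q f} * measure_pmf.prob (P i) {y. R y}"
proof -
  have "Pi_pmf I d P = map_pmf (\<lambda>(y, f). f(i := y)) (pair_pmf (P i) (Pi_pmf (I - {i}) d P))"
    using assms(1,2) Pi_pmf_insert[of "I - {i}" i d P] by (simp add: insert_absorb)
  then show ?thesis
    using prob_pair_pmf_factor_fst[of "P i" "\<lambda>(y, f). Q f" R _ "Pi_pmf (I - {i}) d P"]
    by (simp add: vimage_def case_prod_beta Q_indep)
qed

lemma pmf_arrival_pmf:
  assumes "\<forall>s\<in>{1..S}. 0 \<le> lam s t" "(\<Sum>s\<in>{1..S}. lam s t) \<le> 1"
  shows "pmf (arrival_pmf S lam t) oa = (case oa of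
       None \<Rightarrow> 1 - (\<Sum>s\<in>{1..S}. lam s t)
     | Some s \<Rightarrow> (if s \<in> {1..S} then lam s t else 0))"
    (is "_ = ?f oa")
proof -
  have nonneg: "0 \<le> ?f oa" for oa
    using assms by (auto split: option.splits)
  let ?A = "insert None (Some ` {1..S})"
  have "(\<integral>\<^sup>+oa. ?f oa \<partial>count_space UNIV) = (\<Sum>oa\<in>?A. ennreal (?f oa))"
    by (rule nn_integral_count_space') (auto split: option.splits)
  also have "\<dots> = ennreal (?f None + (\<Sum>oa\<in>Some ` {1..S}. ?f oa))"
    using nonneg by (simp add: sum_ennreal)
  also have "(\<Sum>oa\<in>Some ` {1..S}. ?f oa) = (\<Sum>s\<in>{1..S}. lam s t)"
    by (simp add: sum.reindex)
  finally have "(\<integral>\<^sup>+oa. ?f oa \<partial>count_space UNIV) = 1"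
    by simp
  then show ?thesis
    unfolding arrival_pmf_def using nonneg by (subst pmf_embed_pmf) auto
qed

lemma set_arrival_pmf_subset:
  assumes "\<forall>s\<in>{1..S}. 0 \<le> lam s t" "(\<Sum>s\<in>{1..S}. lam s t) \<le> 1"
  shows "set_pmf (arrival_pmf S lam t) \<subseteq> insert None (Some ` {1..S})"
proof
  fix oa
  assume "oa \<in> set_pmf (arrival_pmf S lam t)"
  then have "pmf (arrival_pmf S lam t) oa \<noteq> 0"
    by (simp add: set_pmf_eq)
  then show "oa \<in> insert None (Some ` {1..S})"
    using pmf_arrival_pmf[of S lam t oa, OF assms] by (cases oa) (auto split: if_splits)
qed

lemma prob_greater_eq_1_minus_G:
  assumes "0 \<notin> set_pmf g"
  shows "measure_pmf.prob g {n. n > k} = 1 - G g k"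
proof -
  have "measure_pmf.prob g {n. n > k} = 1 - measure_pmf.prob g {..k}"
    using measure_pmf.prob_compl[of "{..k}" g]
    by (simp add: Compl_eq_Diff_UNIV[symmetric] not_le greaterThan_def)
  also have "measure_pmf.prob g {..k} = measure_pmf.prob g {1..k}"
  proof -
    have "{..k} \<inter> set_pmf g = {1..k} \<inter> set_pmf g"
      using assms by (auto simp: Suc_le_eq) (metis neq0_conv)
    then show ?thesis
      by (metis measure_Int_set_pmf)
  qed
  finally show ?thesis
    by (simp add: G_def)
qed

definition notified_active :: "nat \<Rightarrow> policy \<Rightarrow> arrivals \<Rightarrow> zs \<Rightarrow> rs \<Rightarrow> nat \<Rightarrow> nat \<Rightarrow> nat \<Rightarrow> bool"
  where "notified_active V \<pi> a z r v s \<tau> \<longleftrightarrow>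
    a \<tau> = Some s \<and> v \<in> \<pi> \<tau> a z r \<and> ready V \<pi> a z r (\<tau> - 1) v \<le> \<tau>"

lemma nonanticipatingD:
  assumes "nonanticipating \<pi>"
    and "\<And>v \<tau>. \<tau> < t \<Longrightarrow> z (v, \<tau>) = z' (v, \<tau>)"
    and "\<And>v s \<tau>. \<tau> < t \<Longrightarrow> r (v, s, \<tau>) = r' (v, s, \<tau>)"
  shows "\<pi> t a z r = \<pi> t a z' r'"
proof -
  have "(\<forall>v \<tau>. \<tau> < t \<longrightarrow> z (v, \<tau>) = z' (v, \<tau>)) \<and>
      (\<forall>v s \<tau>. \<tau> < t \<longrightarrow> r (v, s, \<tau>) = r' (v, s, \<tau>))"
    using assms(2,3) by simp
  then show ?thesis
    using assms(1) unfolding nonanticipating_def by (elim allE impE)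
qed

lemma ready_cong_past:
  assumes "nonanticipating \<pi>"
    and "\<And>v \<tau>. \<tau> \<le> t \<Longrightarrow> z (v, \<tau>) = z' (v, \<tau>)"
    and "\<And>v s \<tau>. \<tau> < t \<Longrightarrow> r (v, s, \<tau>) = r' (v, s, \<tau>)"
  shows "ready V \<pi> a z r t = ready V \<pi> a z' r' t"
  using assms(2,3)
proof (induction t)
  case 0
  show ?case by simp
next
  case (Suc t)
  have "ready V \<pi> a z r t = ready V \<pi> a z' r' t"
    using Suc.prems by (intro Suc.IH) auto
  moreover have "\<pi> (Suc t) a z r = \<pi> (Suc t) a z' r'"
    using Suc.prems by (intro nonanticipatingD[OF assms(1)]) auto
  moreover have "z (v, Suc t) = z' (v, Suc t)" for v
    using Suc.prems(1) by simp
  ultimately show ?case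
    unfolding ready.simps Let_def by (simp only:)
qed

lemma notified_active_cong_past:
  assumes "nonanticipating \<pi>" "1 \<le> \<tau>"
    and "\<And>v t. t < \<tau> \<Longrightarrow> z (v, t) = z' (v, t)"
    and "\<And>v s t. t < \<tau> \<Longrightarrow> r (v, s, t) = r' (v, s, t)"
  shows "notified_active V \<pi> a z r v s \<tau> = notified_active V \<pi> a z' r' v s \<tau>"
proof -
  have "\<pi> \<tau> a z r = \<pi> \<tau> a z' r'"
    using assms by (intro nonanticipatingD) auto
  moreover have "ready V \<pi> a z r (\<tau> - 1) = ready V \<pi> a z' r' (\<tau> - 1)"
    using assms by (intro ready_cong_past) auto
  ultimately show ?thesis
    unfolding notified_active_def by simp
qed

lemma ready_mono:
  assumes "t \<le> t'"
  shows "ready V \<pi> a z r t v \<le> ready V \<pi> a z r t' v"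
proof -
  have "ready V \<pi> a z r t v \<le> ready V \<pi> a z r (Suc t) v" for t
    by (cases "a (Suc t)") (auto simp: Let_def)
  then show ?thesis
    using lift_Suc_mono_le[of "\<lambda>t. ready V \<pi> a z r t v"] assms by blast
qed

lemma ready_notified_active:
  assumes "1 \<le> \<tau>" "v \<in> {1..V}" "notified_active V \<pi> a z r v s \<tau>"
  shows "ready V \<pi> a z r \<tau> v = \<tau> + z (v, \<tau>)"
proof -
  obtain k where "\<tau> = Suc k"
    using assms(1) by (cases \<tau>) auto
  then show ?thesis
    using assms(2,3) by (simp add: notified_active_def Let_def)
qed

lemma not_notified_active_while_inactive:
  assumes "v \<in> {1..V}" "1 \<le> \<tau>" "\<tau> < \<tau>'" "\<tau>' \<le> t"
    and "notified_active V \<pi> a z r v s \<tau>" "z (v, \<tau>) > t - \<tau>"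
  shows "\<not> notified_active V \<pi> a z r v s' \<tau>'"
proof
  assume "notified_active V \<pi> a z r v s' \<tau>'"
  then have "ready V \<pi> a z r (\<tau>' - 1) v \<le> \<tau>'"
    by (simp add: notified_active_def)
  moreover have "ready V \<pi> a z r \<tau> v \<le> ready V \<pi> a z r (\<tau>' - 1) v"
    using assms(3) by (intro ready_mono) auto
  ultimately show False
    using ready_notified_active[OF assms(2,1,5)] assms(3,4,6) by simp
qed

lemma completed_iff_notified_active:
  assumes "1 \<le> t"
  shows "completed V \<pi> a z r t \<longleftrightarrow>
    (\<exists>s. a t = Some s \<and> (\<exists>v\<in>{1..V}. notified_active V \<pi> a z r v s t \<and> r (v, s, t)))"
  by (cases "a t") (auto simp: completed_def notified_active_def)

lemma expectation_card_eq_sum_prob: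
  assumes "finite A"
  shows "measure_pmf.expectation M (\<lambda>w. real (card {t\<in>A. P w t})) =
    (\<Sum>t\<in>A. measure_pmf.prob M {w. P w t})"
proof -
  have "real (card {t\<in>A. P w t}) = (\<Sum>t\<in>A. indicator {w. P w t} w)" for w
    using assms by (simp add: indicator_def sum.If_cases Int_def)
  then show ?thesis
    by (simp add: Bochner_Integration.integral_sum measure_pmf.integrable_const_bound[where B=1])
qed

lemma inactive_after_events_disjoint:
  assumes "v \<in> {1..V}"
  shows "disjoint_family_on
    (\<lambda>(\<tau>, s). {(a, z, r). notified_active V \<pi> a z r v s \<tau> \<and> z (v, \<tau>) > t - \<tau>})
    ({1..t} \<times> {1..S})" (is "disjoint_family_on ?B _")
proof -
  have "(\<tau>, s) = (\<tau>', s')"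
    if "\<tau> \<in> {1..t}" "\<tau>' \<in> {1..t}" "(a, z, r) \<in> ?B (\<tau>, s)" "(a, z, r) \<in> ?B (\<tau>', s')"
    for \<tau> s \<tau>' s' a z r
  proof -
    have *: "notified_active V \<pi> a z r v s \<tau>" "z (v, \<tau>) > t - \<tau>"
      "notified_active V \<pi> a z r v s' \<tau>'" "z (v, \<tau>') > t - \<tau>'"
      using that(3,4) by auto
    consider "\<tau> = \<tau>'" | "\<tau> < \<tau>'" | "\<tau>' < \<tau>"
      by linarith
    then show ?thesis
    proof cases
      case 1
      then show ?thesis using * by (auto simp: notified_active_def)
    next
      case 2
      then show ?thesis using not_notified_active_while_inactive[OF assms _ 2] * that(1,2) by auto
    next
      case 3
      then show ?thesis using not_notified_active_while_inactive[OF assms _ 3] * that(1,2) by auto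
    qed
  qed
  then show ?thesis
    unfolding disjoint_family_on_def by fastforce
qed

context
  fixes V S T :: nat and lam p :: "nat \<Rightarrow> nat \<Rightarrow> real" and g :: "nat pmf" and \<pi> :: policy
  assumes lam_nonneg: "\<forall>s\<in>{1..S}. \<forall>t\<in>{1..T}. 0 \<le> lam s t"
    and lam_sum_le_1: "\<forall>t\<in>{1..T}. (\<Sum>s\<in>{1..S}. lam s t) \<le> 1"
    and p_prob: "\<forall>v\<in>{1..V}. \<forall>s\<in>{1..S}. 0 \<le> p v s \<and> p v s \<le> 1"
    and g_pos: "0 \<notin> set_pmf g"
    and nonanticipating: "nonanticipating \<pi>"
begin

abbreviation scenario :: "(arrivals \<times> zs \<times> rs) pmf"
  where "scenario \<equiv> scenario_pmf V S T lam p g"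

definition notified_event :: "nat \<Rightarrow> nat \<Rightarrow> nat \<Rightarrow> (arrivals \<times> zs \<times> rs) set"
  where "notified_event v s t = {(a, z, r). notified_active V \<pi> a z r v s t}"

(* For lam s t = 0 the division gives 0, and the event is then null anyway. *)
definition policy_x :: "nat \<Rightarrow> nat \<Rightarrow> nat \<Rightarrow> real"
  where "policy_x v s t = measure_pmf.prob scenario (notified_event v s t) / lam s t"

lemma prob_arrival:
  assumes "t \<in> {1..T}"
  shows "measure_pmf.prob scenario {(a, z, r). a t \<in> X} = measure_pmf.prob (arrival_pmf S lam t) X"
proof -
  let ?A = "Pi_pmf {1..T} None (arrival_pmf S lam)"
  have "measure_pmf.prob scenario {(a, z, r). a t \<in> X} =
      measure_pmf.prob scenario (fst -` {a. a t \<in> X})"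
    by (intro arg_cong[where f = "measure_pmf.prob scenario"]) auto
  also have "\<dots> = measure_pmf.prob (map_pmf fst scenario) {a. a t \<in> X}"
    by simp
  also have "\<dots> = measure_pmf.prob (map_pmf (\<lambda>a. a t) ?A) X"
    by (simp add: scenario_pmf_def map_fst_pair_pmf vimage_def)
  also have "map_pmf (\<lambda>a. a t) ?A = arrival_pmf S lam t"
    using assms by (simp add: Pi_pmf_component)
  finally show ?thesis .
qed

lemma prob_arrival_Some:
  assumes "t \<in> {1..T}" "s \<in> {1..S}"
  shows "measure_pmf.prob scenario {(a, z, r). a t = Some s} = lam s t"
  using prob_arrival[OF assms(1), of "{Some s}"] pmf_arrival_pmf[of S lam t "Some s"]
    lam_nonneg lam_sum_le_1 assms by (simp add: measure_pmf_single)

lemma prob_arrival_invalid: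
  assumes "t \<in> {1..T}"
  shows "measure_pmf.prob scenario {(a, z, r). a t \<notin> insert None (Some ` {1..S})} = 0"
  using prob_arrival[OF assms, of "- insert None (Some ` {1..S})"]
    set_arrival_pmf_subset[of S lam t] lam_nonneg lam_sum_le_1 assms
  by (auto simp: measure_pmf_zero_iff)

lemma prob_notified_le:
  assumes "t \<in> {1..T}" "s \<in> {1..S}"
  shows "measure_pmf.prob scenario (notified_event v s t) \<le> lam s t"
proof -
  have "measure_pmf.prob scenario (notified_event v s t) \<le>
      measure_pmf.prob scenario {(a, z, r). a t = Some s}"
    by (rule measure_pmf.finite_measure_mono) (auto simp: notified_event_def notified_active_def)
  then show ?thesis
    using prob_arrival_Some[OF assms] by simp
qed

lemma lam_mult_policy_x:
  assumes "t \<in> {1..T}" "s \<in> {1..S}"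
  shows "lam s t * policy_x v s t = measure_pmf.prob scenario (notified_event v s t)"
proof (cases "lam s t = 0")
  case True
  then show ?thesis
    using prob_notified_le[OF assms, of v] measure_nonneg[of scenario "notified_event v s t"]
    by simp
next
  case False
  then show ?thesis
    by (simp add: policy_x_def)
qed

lemma policy_x_bounds:
  assumes "t \<in> {1..T}" "s \<in> {1..S}"
  shows "0 \<le> policy_x v s t" "policy_x v s t \<le> 1"
proof -
  have "0 \<le> lam s t"
    using lam_nonneg assms by blast
  then show "0 \<le> policy_x v s t" "policy_x v s t \<le> 1"
    using prob_notified_le[OF assms, of v] by (auto simp: policy_x_def divide_le_eq_1)
qed

lemma prob_notified_respond:
  assumes "v \<in> {1..V}" "s \<in> {1..S}" "t \<in> {1..T}"
  shows "measure_pmf.prob scenario {(a, z, r). notified_active V \<pi> a z r v s t \<and> r (v, s, t)} =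
    measure_pmf.prob scenario (notified_event v s t) * p v s"
proof -
  let ?R = "Pi_pmf ({1..V} \<times> {1..S} \<times> {1..T}) False (\<lambda>(v, s, t). bernoulli_pmf (p v s))"
  have "{b. b} = {True}"
    by auto
  then have "measure_pmf.prob (bernoulli_pmf (p v s)) {b. b} = p v s"
    using p_prob assms by (simp add: measure_pmf_single)
  moreover have "notified_active V \<pi> a z (r((v, s, t) := b)) v s t = notified_active V \<pi> a z r v s t"
    for a z r b
    using assms(3) by (intro notified_active_cong_past[OF nonanticipating]) auto
  ultimately have "measure_pmf.prob ?R {r. notified_active V \<pi> a z r v s t \<and> r (v, s, t)} =
      measure_pmf.prob ?R {r. notified_active V \<pi> a z r v s t} * p v s" for a z
    using prob_Pi_pmf_factor_component[of _ "(v, s, t)" "\<lambda>r. notified_active V \<pi> a z r v s t"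
        False _ "\<lambda>b. b"] assms
    by simp
  then show ?thesis
    unfolding scenario_pmf_def notified_event_def by (rule prob_pair_pmf3_factor_third)
qed

lemma prob_notified_still_inactive:
  assumes "v \<in> {1..V}" "t \<in> {1..T}"
  shows "measure_pmf.prob scenario {(a, z, r). notified_active V \<pi> a z r v s t \<and> z (v, t) > k} =
    measure_pmf.prob scenario (notified_event v s t) * (1 - G g k)"
proof -
  let ?Z = "Pi_pmf ({1..V} \<times> {1..T}) 0 (\<lambda>_. g)"
  have "notified_active V \<pi> a (z((v, t) := n)) r v s t = notified_active V \<pi> a z r v s t"
    for a z r n
    using assms(2) by (intro notified_active_cong_past[OF nonanticipating]) auto
  then have "measure_pmf.prob ?Z {z. notified_active V \<pi> a z r v s t \<and> z (v, t) > k} =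
      measure_pmf.prob ?Z {z. notified_active V \<pi> a z r v s t} * (1 - G g k)" for a r
    using prob_Pi_pmf_factor_component[of _ "(v, t)" "\<lambda>z. notified_active V \<pi> a z r v s t"
        0 _ "\<lambda>n. n > k"] prob_greater_eq_1_minus_G[OF g_pos] assms
    by simp
  then show ?thesis
    unfolding scenario_pmf_def notified_event_def by (rule prob_pair_pmf3_factor_second)
qed

lemma prob_completed_type_le:
  assumes "s \<in> {1..S}" "t \<in> {1..T}"
  shows "measure_pmf.prob scenario
      {(a, z, r). \<exists>v\<in>{1..V}. notified_active V \<pi> a z r v s t \<and> r (v, s, t)}
    \<le> lam s t * min (\<Sum>v\<in>{1..V}. policy_x v s t * p v s) 1"
    (is "measure_pmf.prob scenario ?C \<le> _")
proof -
  have "measure_pmf.prob scenario ?C \<le> measure_pmf.prob scenario {(a, z, r). a t = Some s}"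
    by (rule measure_pmf.finite_measure_mono) (auto simp: notified_active_def)
  then have by_arrival: "measure_pmf.prob scenario ?C \<le> lam s t"
    using prob_arrival_Some[OF assms(2,1)] by simp
  have "measure_pmf.prob scenario ?C \<le> measure_pmf.prob scenario
      (\<Union>v\<in>{1..V}. {(a, z, r). notified_active V \<pi> a z r v s t \<and> r (v, s, t)})"
    by (rule measure_pmf.finite_measure_mono) auto
  also have "\<dots> \<le> (\<Sum>v\<in>{1..V}.
      measure_pmf.prob scenario {(a, z, r). notified_active V \<pi> a z r v s t \<and> r (v, s, t)})"
    by (rule measure_pmf.finite_measure_subadditive_finite) auto
  also have "\<dots> = (\<Sum>v\<in>{1..V}. lam s t * (policy_x v s t * p v s))"
    using prob_notified_respond[OF _ assms] lam_mult_policy_x[OF assms(2,1)]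
    by (intro sum.cong) (simp_all add: mult.assoc)
  finally have by_responses: "measure_pmf.prob scenario ?C \<le>
      lam s t * (\<Sum>v\<in>{1..V}. policy_x v s t * p v s)"
    by (simp add: sum_distrib_left)
  show ?thesis
    using by_arrival by_responses by (simp add: min_def)
qed

lemma prob_completed_le:
  assumes "t \<in> {1..T}"
  shows "measure_pmf.prob scenario {(a, z, r). completed V \<pi> a z r t}
    \<le> (\<Sum>s\<in>{1..S}. lam s t * min (\<Sum>v\<in>{1..V}. policy_x v s t * p v s) 1)"
proof -
  define C where "C s = {(a, z, r). \<exists>v\<in>{1..V}. notified_active V \<pi> a z r v s t \<and> r (v, s, t)}"
    for s
  define Invalid where "Invalid = {(a, z :: zs, r :: rs). a t \<notin> insert None (Some ` {1..S})}"
  have "{(a, z, r). completed V \<pi> a z r t} \<subseteq> (\<Union>s\<in>{1..S}. C s) \<union> Invalid"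
    using assms by (auto simp: completed_iff_notified_active C_def Invalid_def)
  then have "measure_pmf.prob scenario {(a, z, r). completed V \<pi> a z r t}
      \<le> measure_pmf.prob scenario ((\<Union>s\<in>{1..S}. C s) \<union> Invalid)"
    by (rule measure_pmf.finite_measure_mono) simp
  also have "\<dots> \<le> measure_pmf.prob scenario (\<Union>s\<in>{1..S}. C s) + measure_pmf.prob scenario Invalid"
    by (rule measure_Un_le) auto
  also have "measure_pmf.prob scenario Invalid = 0"
    unfolding Invalid_def by (rule prob_arrival_invalid[OF assms])
  also have "measure_pmf.prob scenario (\<Union>s\<in>{1..S}. C s) \<le>
      (\<Sum>s\<in>{1..S}. measure_pmf.prob scenario (C s))"
    by (rule measure_pmf.finite_measure_subadditive_finite) auto
  also have "\<dots> \<le> (\<Sum>s\<in>{1..S}. lam s t * min (\<Sum>v\<in>{1..V}. policy_x v s t * p v s) 1)"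
    unfolding C_def using prob_completed_type_le assms by (intro sum_mono) auto
  finally show ?thesis
    by simp
qed

lemma policy_x_constraint:
  assumes "v \<in> {1..V}" "t \<in> {1..T}"
  shows "(\<Sum>\<tau>\<in>{1..t}. \<Sum>s\<in>{1..S}. lam s \<tau> * policy_x v s \<tau> * (1 - G g (t - \<tau>))) \<le> 1"
proof -
  define B where
    "B = (\<lambda>(\<tau>, s). {(a, z, r :: rs). notified_active V \<pi> a z r v s \<tau> \<and> z (v, \<tau>) > t - \<tau>})"
  have "(\<Sum>\<tau>\<in>{1..t}. \<Sum>s\<in>{1..S}. lam s \<tau> * policy_x v s \<tau> * (1 - G g (t - \<tau>))) =
      (\<Sum>(\<tau>, s)\<in>{1..t} \<times> {1..S}. measure_pmf.prob scenario (B (\<tau>, s)))"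
    unfolding sum.cartesian_product[symmetric] B_def using assms
    by (intro sum.cong refl) (simp add: prob_notified_still_inactive lam_mult_policy_x)
  also have "\<dots> = measure_pmf.prob scenario (\<Union>i\<in>{1..t} \<times> {1..S}. B i)"
    using inactive_after_events_disjoint[OF assms(1), of \<pi> t S]
    by (simp add: B_def measure_pmf.finite_measure_finite_Union case_prod_beta')
  also have "\<dots> \<le> 1"
    by simp
  finally show ?thesis .
qed

lemma policy_x_feasible: "policy_x \<in> LP_feasible V S T lam g"
  unfolding LP_feasible_def using policy_x_bounds policy_x_constraint by blast

lemma expected_completed_le_LP_obj:
  "expected_completed V S T lam p g \<pi> \<le> LP_obj V S T lam p policy_x"
proof -
  have "(\<lambda>(a, z, r). real (num_completed V T \<pi> a z r)) =
      (\<lambda>w. real (card {t\<in>{1..T}. case w of (a, z, r) \<Rightarrow> completed V \<pi> a z r t}))"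
    by (auto simp: num_completed_def)
  then have "expected_completed V S T lam p g \<pi> =
      (\<Sum>t\<in>{1..T}. measure_pmf.prob scenario {(a, z, r). completed V \<pi> a z r t})"
    by (simp only: expected_completed_def expectation_card_eq_sum_prob finite_atLeastAtMost)
  also have "\<dots> \<le> LP_obj V S T lam p policy_x"
    unfolding LP_obj_def by (intro sum_mono prob_completed_le)
  finally show ?thesis .
qed

end

lemma bdd_above_LP_obj:
  assumes "\<forall>s\<in>{1..S}. \<forall>t\<in>{1..T}. 0 \<le> lam s t"
  shows "bdd_above (LP_obj V S T lam p ` X)"
proof (rule bdd_aboveI2)
  fix x
  show "LP_obj V S T lam p x \<le> (\<Sum>t\<in>{1..T}. \<Sum>s\<in>{1..S}. lam s t)"
    unfolding LP_obj_def using assms by (intro sum_mono) (simp add: mult_left_le)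
qed

theorem proposition1:
  fixes V S T :: nat and lam :: "nat \<Rightarrow> nat \<Rightarrow> real" and p :: "nat \<Rightarrow> nat \<Rightarrow> real"
    and g :: "nat pmf"
  assumes "\<forall>s\<in>{1..S}. \<forall>t\<in>{1..T}. 0 \<le> lam s t"
    and "\<forall>t\<in>{1..T}. (\<Sum>s\<in>{1..S}. lam s t) \<le> 1"
    and "\<forall>v\<in>{1..V}. \<forall>s\<in>{1..S}. 0 \<le> p v s \<and> p v s \<le> 1"
    and "0 \<notin> set_pmf g"
  shows "clairvoyant_value V S T lam p g \<le> LP_value V S T lam p g"
proof -
  have "expected_completed V S T lam p g \<pi> \<le> LP_value V S T lam p g" if "nonanticipating \<pi>" for \<pi>
  proof -
    have "expected_completed V S T lam p g \<pi> \<le> LP_obj V S T lam p (policy_x V S T lam p g \<pi>)"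
      by (rule expected_completed_le_LP_obj[OF assms that])
    also have "\<dots> \<le> LP_value V S T lam p g"
      unfolding LP_value_def
      by (intro cSup_upper imageI policy_x_feasible[OF assms that] bdd_above_LP_obj assms(1))
    finally show ?thesis .
  qed
  moreover have "nonanticipating (\<lambda>_ _ _ _. {})"
    by (simp add: nonanticipating_def)
  ultimately show ?thesis
    unfolding clairvoyant_value_def by (intro cSup_least) auto
qed

end
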